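(* Let $X\subseteq\mathbb{R}^n$ and let $F:X\rightrightarrows\mathbb{R}^m$ be a set-valued function with open graph and nonempty monovex values. Then $F$ has a continuous selection: there is a continuous function $f:X\to\mathbb{R}^m$ with $f(x)\in F(x)$ for every $x\in X$.
   Context: A set $B \subseteq \mathbb{R}^m$ is monovex if for every $x,y \in B$ there is a continuous path $\gamma:[0,1]\to B$ with $\gamma(0)=x$, $\gamma(1)=y$ and each coordinate $\gamma_i$ monotone (nondecreasing or nonincreasing). The graph of $F$ is $\{(x,y)\in X\times\mathbb{R}^m: y\in F(x)\}$, and "open graph" means this set is open in $X\times\mathbb{R}^m$. *)

theory Defs
  imports "HOL-Analysis.Analysis"
begin

definition monovex :: "(real ^ 'm) set \<Rightarrow> bool" where
  "monovex B \<longleftrightarrow>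
     (\<forall>x\<in>B. \<forall>y\<in>B. \<exists>\<gamma> :: real \<Rightarrow> real ^ 'm.
        continuous_on {0..1} \<gamma> \<and> \<gamma> ` {0..1} \<subseteq> B \<and> \<gamma> 0 = x \<and> \<gamma> 1 = y \<and>
        (\<forall>i. mono_on {0..1} (\<lambda>t. \<gamma> t $ i) \<or> antimono_on {0..1} (\<lambda>t. \<gamma> t $ i)))"

definition graph_on :: "'a set \<Rightarrow> ('a \<Rightarrow> 'b set) \<Rightarrow> ('a \<times> 'b) set" where
  "graph_on X F = {(x, y). x \<in> X \<and> y \<in> F x}"

end

theory Submission imports Defs begin

text \<open>The selection is built one coordinate at a time. The image of a monovex set under a
coordinate projection is connected, hence an interval, and the projected map inherits open
lower sections from the open graph of \<open>F\<close>; Browder's selection theorem (a partition of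
unity argument) therefore selects that coordinate continuously, say as \<open>s(x)\<close>. Fixing the
coordinate to \<open>s(x)\<close> leaves a slice of \<open>F(x)\<close> that is again nonempty with open graph, and
it is again monovex: a path with monotone coordinates joining two points with equal
\<open>j\<close>-th coordinate keeps that coordinate constant. Recursing on the remaining coordinates
gives the selection.\<close>

lemma continuous_on_supp_sum_locally_finite:
  fixes g :: "'i \<Rightarrow> 'a::t2_space \<Rightarrow> 'b::real_normed_vector"
  assumes cont: "\<And>i. i \<in> I \<Longrightarrow> continuous_on X (g i)"
    and fin: "\<And>x. x \<in> X \<Longrightarrow> \<exists>V. open V \<and> x \<in> V \<and> finite {i \<in> I. \<exists>v\<in>V. g i v \<noteq> 0}"
  shows "continuous_on X (\<lambda>x. supp_sum (\<lambda>i. g i x) I)"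
  unfolding continuous_on_eq_continuous_within
proof
  fix a assume "a \<in> X"
  obtain V where V: "open V" "a \<in> V" and finV: "finite {i \<in> I. \<exists>v\<in>V. g i v \<noteq> 0}"
    using fin[OF \<open>a \<in> X\<close>] by blast
  define J where "J = {i \<in> I. \<exists>v\<in>V. g i v \<noteq> 0}"
  show "continuous (at a within X) (\<lambda>x. supp_sum (\<lambda>i. g i x) I)"
  proof (rule continuous_transform_within_openin)
    show "continuous (at a within X) (\<lambda>x. \<Sum>i\<in>J. g i x)"
      using cont \<open>a \<in> X\<close>
      by (intro continuous_sum) (auto simp: J_def continuous_on_eq_continuous_within)
    show "openin (top_of_set X) (X \<inter> V)" "a \<in> X \<inter> V"
      using V \<open>a \<in> X\<close> by auto
    show "(\<Sum>i\<in>J. g i x) = supp_sum (\<lambda>i. g i x) I" if "x \<in> X \<inter> V" for x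
      using that finV unfolding J_def supp_sum_def support_on_def
      by (auto intro: sum.mono_neutral_right)
  qed
qed

theorem Browder_selection:
  fixes X :: "'a::{metric_space,second_countable_topology} set"
    and G :: "'a \<Rightarrow> 'b::real_normed_vector set"
  assumes lower: "\<And>y. openin (top_of_set X) {x \<in> X. y \<in> G x}"
    and nonempty: "\<And>x. x \<in> X \<Longrightarrow> G x \<noteq> {}"
    and convex: "\<And>x. x \<in> X \<Longrightarrow> convex (G x)"
  obtains g where "continuous_on X g" and "\<And>x. x \<in> X \<Longrightarrow> g x \<in> G x"
proof -
  define \<C> where "\<C> = {U. open U \<and> (\<exists>y. \<forall>x\<in>X \<inter> U. y \<in> G x)}"
  have "X \<subseteq> \<Union>\<C>"
  proof
    fix x assume "x \<in> X"
    then obtain y where "y \<in> G x" using nonempty by blast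
    obtain U where "open U" "{x \<in> X. y \<in> G x} = X \<inter> U"
      using lower[of y] by (auto simp: openin_open)
    with \<open>x \<in> X\<close> \<open>y \<in> G x\<close> show "x \<in> \<Union>\<C>" unfolding \<C>_def by blast
  qed
  then obtain \<C>' where cover: "X \<subseteq> \<Union>\<C>'"
    and refine: "\<And>U. U \<in> \<C>' \<Longrightarrow> open U \<and> (\<exists>T. T \<in> \<C> \<and> U \<subseteq> T)"
    and loc_fin: "\<And>x. x \<in> X \<Longrightarrow> \<exists>V. open V \<and> x \<in> V \<and> finite {U. U \<in> \<C>' \<and> U \<inter> V \<noteq> {}}"
    using paracompact[of X \<C>] unfolding \<C>_def by blast
  have "\<exists>y. \<forall>x\<in>X \<inter> U. y \<in> G x" if "U \<in> \<C>'" for U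
    using refine[OF that] unfolding \<C>_def by blast
  then obtain Y where Y: "\<And>U x. U \<in> \<C>' \<Longrightarrow> x \<in> X \<inter> U \<Longrightarrow> Y U \<in> G x"
    by metis
  obtain H :: "['a set, 'a] \<Rightarrow> real"
    where H_cont: "\<And>U. U \<in> \<C>' \<Longrightarrow> continuous_on X (H U) \<and> (\<forall>x\<in>X. 0 \<le> H U x)"
      and H_zero: "\<And>x U. \<lbrakk>U \<in> \<C>'; x \<in> X; x \<notin> U\<rbrakk> \<Longrightarrow> H U x = 0"
      and H_sum: "\<And>x. x \<in> X \<Longrightarrow> supp_sum (\<lambda>U. H U x) \<C>' = 1"
      and H_fin: "\<And>x. x \<in> X \<Longrightarrow> \<exists>V. open V \<and> x \<in> V \<and> finite {U \<in> \<C>'. \<exists>x\<in>V. H U x \<noteq> 0}"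
    using subordinate_partition_of_unity[OF cover _ loc_fin] refine by blast
  show thesis
  proof
    show "continuous_on X (\<lambda>x. supp_sum (\<lambda>U. H U x *\<^sub>R Y U) \<C>')"
    proof (rule continuous_on_supp_sum_locally_finite)
      show "continuous_on X (\<lambda>x. H U x *\<^sub>R Y U)" if "U \<in> \<C>'" for U
        using H_cont[OF that] by (intro continuous_intros) auto
      show "\<exists>V. open V \<and> x \<in> V \<and> finite {U \<in> \<C>'. \<exists>v\<in>V. H U v *\<^sub>R Y U \<noteq> 0}"
        if x: "x \<in> X" for x
      proof -
        obtain V where "open V" "x \<in> V" and fin: "finite {U \<in> \<C>'. \<exists>v\<in>V. H U v \<noteq> 0}"
          using H_fin[OF x] by blast
        moreover have "{U \<in> \<C>'. \<exists>v\<in>V. H U v *\<^sub>R Y U \<noteq> 0} \<subseteq> {U \<in> \<C>'. \<exists>v\<in>V. H U v \<noteq> 0}"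
          by auto
        ultimately show ?thesis
          using finite_subset by blast
      qed
    qed
    show "supp_sum (\<lambda>U. H U x *\<^sub>R Y U) \<C>' \<in> G x" if "x \<in> X" for x
    proof (rule convex_supp_sum[OF convex[OF that] H_sum[OF that]])
      show "0 \<le> H U x \<and> (H U x = 0 \<or> Y U \<in> G x)" if "U \<in> \<C>'" for U
        using H_cont[OF \<open>U \<in> \<C>'\<close>] H_zero[OF \<open>U \<in> \<C>'\<close> \<open>x \<in> X\<close>] Y[OF \<open>U \<in> \<C>'\<close>] \<open>x \<in> X\<close>
        by blast
    qed
  qed
qed

lemma openin_lower_section_if_openin_graph:
  assumes "openin (top_of_set (X \<times> (UNIV :: 'b::topological_space set))) (graph_on X F)"
  shows "openin (top_of_set X) {x \<in> X. y \<in> F x}"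
proof -
  have "{x \<in> X. y \<in> F x} = X \<inter> (\<lambda>x. (x, y)) -` graph_on X F"
    by (auto simp: graph_on_def)
  moreover have "continuous_on X (\<lambda>x. (x, y))"
    by (intro continuous_intros)
  ultimately show ?thesis
    using continuous_openin_preimage[OF _ _ assms, of X] by fastforce
qed

lemma monovex_imp_path_connected: "monovex B \<Longrightarrow> path_connected B"
  unfolding monovex_def path_connected_def path_def path_image_def pathstart_def pathfinish_def
  by blast

lemma convex_component_image_monovex:
  assumes "monovex B"
  shows "convex ((\<lambda>y. y $ j) ` B)"
proof -
  have "connected ((\<lambda>y. y $ j) ` B)"
    using monovex_imp_path_connected[OF assms]
    by (intro connected_continuous_image path_connected_imp_connected continuous_on_component
        continuous_on_id)
  then show ?thesis
    by (simp add: is_interval_connected_1 [symmetric] is_interval_convex_1)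
qed

lemma mono_or_antimono_on_eq_endpoints:
  fixes g :: "real \<Rightarrow> real"
  assumes "mono_on {a..b} g \<or> antimono_on {a..b} g" "g a = c" "g b = c" "t \<in> {a..b}"
  shows "g t = c"
proof -
  have ends: "a \<in> {a..b}" "b \<in> {a..b}" "a \<le> t" "t \<le> b"
    using assms(4) by auto
  from assms(1) show ?thesis
  proof
    assume "mono_on {a..b} g"
    then have "g a \<le> g t" "g t \<le> g b"
      using ends assms(4) by (simp_all add: mono_onD)
    then show ?thesis using assms(2,3) by linarith
  next
    assume anti: "antimono_on {a..b} g"
    have "g t \<le> g a" "g b \<le> g t"
      using monotone_onD[OF anti ends(1) assms(4) ends(3)] monotone_onD[OF anti assms(4) ends(2,4)]
      by simp_all
    then show ?thesis using assms(2,3) by linarith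
  qed
qed

lemma mono_or_antimono_on_affine:
  fixes a d :: real
  shows "mono_on S (\<lambda>t. a + t * d) \<or> antimono_on S (\<lambda>t. a + t * d)"
proof (cases "0 \<le> d")
  case True
  then have "mono_on S (\<lambda>t. a + t * d)"
    by (intro monotone_onI) (simp add: mult_right_mono)
  then show ?thesis ..
next
  case False
  then have "antimono_on S (\<lambda>t. a + t * d)"
    by (intro monotone_onI) (simp add: mult_right_mono_neg)
  then show ?thesis ..
qed

definition vec_upd :: "'m \<Rightarrow> real \<Rightarrow> real ^ 'm \<Rightarrow> real ^ 'm" where
  "vec_upd j c y = (\<chi> i. if i = j then c else y $ i)"

lemma vec_upd_nth: "vec_upd j c y $ i = (if i = j then c else y $ i)"
  by (simp add: vec_upd_def)

lemma vec_upd_triv: "y $ j = c \<Longrightarrow> vec_upd j c y = y"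
  by (simp add: vec_upd_def vec_eq_iff)

lemma continuous_on_vec_upd [continuous_intros]:
  assumes "continuous_on S c" "continuous_on S y"
  shows "continuous_on S (\<lambda>x. vec_upd j (c x) (y x))"
  unfolding vec_upd_def
proof (intro continuous_on_vec_lambda)
  show "continuous_on S (\<lambda>x. if i = j then c x else y x $ i)" for i
    by (cases "i = j") (simp_all add: assms continuous_on_component)
qed

lemma monovex_slice:
  fixes B :: "(real ^ 'm) set"
  assumes "monovex B"
  shows "monovex {y. vec_upd j c y \<in> B}"
  unfolding monovex_def
proof (intro ballI)
  fix y1 y2 assume "y1 \<in> {y. vec_upd j c y \<in> B}" "y2 \<in> {y. vec_upd j c y \<in> B}"
  then obtain \<gamma> :: "real \<Rightarrow> real ^ 'm"
    where \<gamma>: "continuous_on {0..1} \<gamma>" "\<gamma> ` {0..1} \<subseteq> B"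
      "\<gamma> 0 = vec_upd j c y1" "\<gamma> 1 = vec_upd j c y2"
      and \<gamma>_mono: "\<And>i. mono_on {0..1} (\<lambda>t. \<gamma> t $ i) \<or> antimono_on {0..1} (\<lambda>t. \<gamma> t $ i)"
    using assms unfolding monovex_def by blast
  have \<gamma>_j: "\<gamma> t $ j = c" if "t \<in> {0..1}" for t
    using mono_or_antimono_on_eq_endpoints[OF \<gamma>_mono _ _ that] \<gamma>(3,4) by (simp add: vec_upd_nth)
  \<comment> \<open>On the slice the \<open>j\<close>-th coordinate is free, so it may be interpolated linearly.\<close>
  define \<delta> where "\<delta> t = (\<chi> i. if i = j then y1 $ j + t * (y2 $ j - y1 $ j) else \<gamma> t $ i)" for t
  show "\<exists>\<gamma> :: real \<Rightarrow> real ^ 'm. continuous_on {0..1} \<gamma> \<and> \<gamma> ` {0..1} \<subseteq> {y. vec_upd j c y \<in> B} \<and>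
      \<gamma> 0 = y1 \<and> \<gamma> 1 = y2 \<and>
      (\<forall>i. mono_on {0..1} (\<lambda>t. \<gamma> t $ i) \<or> antimono_on {0..1} (\<lambda>t. \<gamma> t $ i))"
  proof (intro exI[of _ \<delta>] conjI allI)
    show "continuous_on {0..1} \<delta>"
      unfolding \<delta>_def
    proof (intro continuous_on_vec_lambda)
      show "continuous_on {0..1} (\<lambda>t. if i = j then y1 $ j + t * (y2 $ j - y1 $ j) else \<gamma> t $ i)" for i
        by (cases "i = j") (simp_all add: continuous_intros \<gamma>(1) continuous_on_component)
    qed
    have "vec_upd j c (\<delta> t) = \<gamma> t" if "t \<in> {0..1}" for t
      using \<gamma>_j[OF that] by (simp add: vec_eq_iff vec_upd_nth \<delta>_def)
    then show "\<delta> ` {0..1} \<subseteq> {y. vec_upd j c y \<in> B}"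
      using \<gamma>(2) by auto
    show "\<delta> 0 = y1" "\<delta> 1 = y2"
      using \<gamma>(3,4) by (simp_all add: \<delta>_def vec_eq_iff vec_upd_nth)
    show "mono_on {0..1} (\<lambda>t. \<delta> t $ i) \<or> antimono_on {0..1} (\<lambda>t. \<delta> t $ i)" for i
      using \<gamma>_mono[of i] mono_or_antimono_on_affine[of "{0..1}" "y1 $ j" "y2 $ j - y1 $ j"]
      by (cases "i = j") (simp_all add: \<delta>_def)
  qed
qed

lemma continuous_selection_component_monovex:
  fixes X :: "'a::{metric_space,second_countable_topology} set"
    and F :: "'a \<Rightarrow> (real ^ 'm) set"
  assumes graph: "openin (top_of_set (X \<times> UNIV)) (graph_on X F)"
    and nonempty: "\<And>x. x \<in> X \<Longrightarrow> F x \<noteq> {}"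
    and monovex: "\<And>x. x \<in> X \<Longrightarrow> monovex (F x)"
  obtains s where "continuous_on X s" and "\<And>x. x \<in> X \<Longrightarrow> s x \<in> (\<lambda>y. y $ j) ` F x"
proof (rule Browder_selection)
  show "openin (top_of_set X) {x \<in> X. r \<in> (\<lambda>y. y $ j) ` F x}" for r
  proof -
    have "{x \<in> X. r \<in> (\<lambda>y. y $ j) ` F x} = (\<Union>y\<in>{y. y $ j = r}. {x \<in> X. y \<in> F x})"
      by auto
    then show ?thesis
      using openin_lower_section_if_openin_graph[OF graph] by auto
  qed
  show "(\<lambda>y. y $ j) ` F x \<noteq> {}" "convex ((\<lambda>y. y $ j) ` F x)" if "x \<in> X" for x
    using nonempty[OF that] convex_component_image_monovex[OF monovex[OF that]] by auto
qed (rule that)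

lemma openin_graph_on_slice:
  fixes F :: "'a::topological_space \<Rightarrow> (real ^ 'm) set"
  assumes graph: "openin (top_of_set (X \<times> UNIV)) (graph_on X F)"
    and s: "continuous_on X s"
  shows "openin (top_of_set (X \<times> UNIV)) (graph_on X (\<lambda>x. {y. vec_upd j (s x) y \<in> F x}))"
proof -
  define \<phi> where "\<phi> z = (fst z, vec_upd j (s (fst z)) (snd z))" for z :: "'a \<times> (real ^ 'm)"
  have "continuous_on (X \<times> UNIV) \<phi>"
    unfolding \<phi>_def
    by (intro continuous_intros continuous_on_compose2[OF s]) auto
  moreover have "\<phi> \<in> X \<times> UNIV \<rightarrow> X \<times> UNIV"
    by (auto simp: \<phi>_def)
  ultimately have "openin (top_of_set (X \<times> UNIV)) ((X \<times> UNIV) \<inter> \<phi> -` graph_on X F)"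
    using graph by (rule continuous_openin_preimage)
  moreover have "(X \<times> UNIV) \<inter> \<phi> -` graph_on X F = graph_on X (\<lambda>x. {y. vec_upd j (s x) y \<in> F x})"
    by (auto simp: graph_on_def \<phi>_def)
  ultimately show ?thesis
    by simp
qed

text \<open>The last hypothesis is the invariant of the induction on \<open>S\<close>, each step fixing one
coordinate; for \<open>S = UNIV\<close> it holds trivially.\<close>
lemma continuous_selection_monovex_cylinder:
  fixes X :: "'a::{metric_space,second_countable_topology} set"
    and F :: "'a \<Rightarrow> (real ^ 'm) set"
  assumes "finite S"
    and "openin (top_of_set (X \<times> UNIV)) (graph_on X F)"
    and "\<And>x. x \<in> X \<Longrightarrow> F x \<noteq> {}"
    and "\<And>x. x \<in> X \<Longrightarrow> monovex (F x)"
    and "\<And>x y y'. \<lbrakk>x \<in> X; y \<in> F x; \<forall>i\<in>S. y' $ i = y $ i\<rbrakk> \<Longrightarrow> y' \<in> F x"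
  shows "\<exists>f. continuous_on X f \<and> (\<forall>x\<in>X. f x \<in> F x)"
  using assms
proof (induction S arbitrary: F rule: finite_induct)
  case empty
  have "0 \<in> F x" if "x \<in> X" for x
    using empty.prems(2)[OF that] empty.prems(4)[OF that] by blast
  then show ?case
    by (intro exI[of _ "\<lambda>_. 0"]) simp
next
  case (insert j S F)
  note graph = insert.prems(1) and nonempty = insert.prems(2)
    and monovex = insert.prems(3) and cylinder = insert.prems(4)
  obtain s where s: "continuous_on X s" "\<And>x. x \<in> X \<Longrightarrow> s x \<in> (\<lambda>y. y $ j) ` F x"
    using continuous_selection_component_monovex[OF graph nonempty monovex] by blast
  define F' where "F' x = {y. vec_upd j (s x) y \<in> F x}" for x
  have "openin (top_of_set (X \<times> UNIV)) (graph_on X F')"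
    unfolding F'_def using graph s(1) by (rule openin_graph_on_slice)
  moreover have "F' x \<noteq> {}" if x: "x \<in> X" for x
  proof -
    obtain y where "y \<in> F x" "y $ j = s x"
      using s(2)[OF x] by auto
    then have "y \<in> F' x"
      by (simp add: F'_def vec_upd_triv)
    then show ?thesis by blast
  qed
  moreover have "monovex (F' x)" if "x \<in> X" for x
    unfolding F'_def using monovex_slice[OF monovex[OF that]] .
  moreover have "y' \<in> F' x" if "x \<in> X" "y \<in> F' x" "\<forall>i\<in>S. y' $ i = y $ i" for x y y'
    using cylinder[of x "vec_upd j (s x) y" "vec_upd j (s x) y'"] that
    by (auto simp: F'_def vec_upd_nth)
  ultimately obtain g where g: "continuous_on X g" "\<And>x. x \<in> X \<Longrightarrow> g x \<in> F' x"
    using insert.IH[of F'] by blast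
  have "continuous_on X (\<lambda>x. vec_upd j (s x) (g x))"
    using s(1) g(1) by (rule continuous_on_vec_upd)
  moreover have "vec_upd j (s x) (g x) \<in> F x" if "x \<in> X" for x
    using g(2)[OF that] by (simp add: F'_def)
  ultimately show ?case
    by blast
qed

theorem lemma3:
  fixes X :: "(real ^ 'n) set" and F :: "real ^ 'n \<Rightarrow> (real ^ 'm) set"
  assumes "openin (top_of_set (X \<times> (UNIV :: (real ^ 'm) set))) (graph_on X F)"
    and "\<And>x. x \<in> X \<Longrightarrow> F x \<noteq> {}"
    and "\<And>x. x \<in> X \<Longrightarrow> monovex (F x)"
  shows "\<exists>f :: real ^ 'n \<Rightarrow> real ^ 'm. continuous_on X f \<and> (\<forall>x\<in>X. f x \<in> F x)"
proof (rule continuous_selection_monovex_cylinder[of UNIV])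
  show "y' \<in> F x" if "x \<in> X" "y \<in> F x" "\<forall>i\<in>UNIV. y' $ i = y $ i" for x y y'
    using that by (metis vec_eq_iff UNIV_I)
qed (use assms in auto)

end
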